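(* Let $G$ be a group, $H\le G$, $S$ a right transversal of $H$ in $G$ with induced right loop operation $\circ$, and for $x\in S$, $h\in H$ let $x\theta h$ denote the unique element of $S\cap Hxh$. Let $U$ be a congruence on $(S,\circ)$ with $\{(x,x\theta h): h\in H, x\in S\}\subseteq U$, and let $T$ be the $U$-class of $1$. Then $S/U$ is a group, $N=HT$ is a normal subgroup of $G=HS$, $H\le N$, $N\cap S=T$, and $G/N\cong S/U$.
   Context: For a subgroup $H$ of a group $G$, a right transversal $S$ is a subset containing exactly one element of each right coset $Hg$, with $1\in S$; then $G=HS$. The induced operation: $x\circ y$ is the unique element of $S\cap Hxy$; $(S,\circ)$ is a right loop (two-sided identity, unique solutions of $X\circ a=b$). A congruence on a right loop $S$ is an equivalence relation on $S$ that is a right subloop of $S\times S$ (componentwise operation); if $T$ is the class of $1$, the classes are $T\circ x$ and $S/U=\{T\circ x\}$ has operation $(T\circ x)\circ(T\circ y)=T\circ(x\circ y)$. *)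

theory Defs
  imports "HOL-Algebra.Algebra"
begin

definition right_transversal :: "('a, 'b) monoid_scheme \<Rightarrow> 'a set \<Rightarrow> 'a set \<Rightarrow> bool" where
  "right_transversal G H S \<longleftrightarrow>
     S \<subseteq> carrier G \<and> \<one>\<^bsub>G\<^esub> \<in> S \<and>
     (\<forall>C \<in> rcosets\<^bsub>G\<^esub> H. \<exists>!s. s \<in> S \<inter> C)"

definition tr_op :: "('a, 'b) monoid_scheme \<Rightarrow> 'a set \<Rightarrow> 'a set \<Rightarrow> 'a \<Rightarrow> 'a \<Rightarrow> 'a" where
  "tr_op G H S x y = (THE z. z \<in> S \<inter> (H #>\<^bsub>G\<^esub> (x \<otimes>\<^bsub>G\<^esub> y)))"

definition tr_theta :: "('a, 'b) monoid_scheme \<Rightarrow> 'a set \<Rightarrow> 'a set \<Rightarrow> 'a \<Rightarrow> 'a \<Rightarrow> 'a" where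
  "tr_theta G H S x h = (THE z. z \<in> S \<inter> (H #>\<^bsub>G\<^esub> (x \<otimes>\<^bsub>G\<^esub> h)))"

definition tr_rdiv :: "('a, 'b) monoid_scheme \<Rightarrow> 'a set \<Rightarrow> 'a set \<Rightarrow> 'a \<Rightarrow> 'a \<Rightarrow> 'a" where
  "tr_rdiv G H S b a = (THE x. x \<in> S \<and> tr_op G H S x a = b)"

text \<open>A congruence on the right loop (S, o): an equivalence relation on S which is a
  right subloop of S \<times> S with componentwise operation (contains the identity,
  closed under the operation and under right division).\<close>
definition loop_congruence :: "('a, 'b) monoid_scheme \<Rightarrow> 'a set \<Rightarrow> 'a set \<Rightarrow> ('a \<times> 'a) set \<Rightarrow> bool" where
  "loop_congruence G H S U \<longleftrightarrow>
     equiv S U \<and>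
     (\<one>\<^bsub>G\<^esub>, \<one>\<^bsub>G\<^esub>) \<in> U \<and>
     (\<forall>a a' b b'. (a, a') \<in> U \<longrightarrow> (b, b') \<in> U \<longrightarrow>
        (tr_op G H S a b, tr_op G H S a' b') \<in> U) \<and>
     (\<forall>a a' b b'. (a, a') \<in> U \<longrightarrow> (b, b') \<in> U \<longrightarrow>
        (tr_rdiv G H S b a, tr_rdiv G H S b' a') \<in> U)"

definition loop_quotient :: "('a, 'b) monoid_scheme \<Rightarrow> 'a set \<Rightarrow> 'a set \<Rightarrow> ('a \<times> 'a) set \<Rightarrow> 'a set monoid" where
  "loop_quotient G H S U =
     \<lparr> carrier = S // U,
       monoid.mult = (\<lambda>A B. U `` {tr_op G H S (SOME x. x \<in> A) (SOME y. y \<in> B)}),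
       one = U `` {\<one>\<^bsub>G\<^esub>} \<rparr>"

end

theory Submission
  imports Defs
begin

text \<open>Map g \<in> G to the U-class of the element of S in its coset H g.
  Writing g = h s with h \<in> H, s \<in> S, the product of g with g' = h' s' has representative
  (s \<theta> h') \<circ> s'; since s \<theta> h' is U-related to s, the map is multiplicative, so S/U
  is a homomorphic image of G, hence a group. Its kernel consists of the g whose
  representative lies in T, which is H T, and the first isomorphism theorem gives
  G/HT \<cong> S/U.\<close>

definition tr_rep :: "('a, 'b) monoid_scheme \<Rightarrow> 'a set \<Rightarrow> 'a set \<Rightarrow> 'a \<Rightarrow> 'a" where
  "tr_rep G H S g = (THE s. s \<in> S \<inter> (H #>\<^bsub>G\<^esub> g))"

lemma tr_op_eq_tr_rep: "tr_op G H S x y = tr_rep G H S (x \<otimes>\<^bsub>G\<^esub> y)"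
  unfolding tr_op_def tr_rep_def ..

lemma tr_theta_eq_tr_rep: "tr_theta G H S x h = tr_rep G H S (x \<otimes>\<^bsub>G\<^esub> h)"
  unfolding tr_theta_def tr_rep_def ..

lemma (in group) surj_hom_imp_group:
  assumes "f \<in> hom G Q" and "f ` carrier G = carrier Q" and "f \<one> = \<one>\<^bsub>Q\<^esub>"
  shows "group Q"
  using hom_imp_img_group[OF assms(1)] assms(2,3) by simp

lemma loop_quotient_mult_class:
  assumes "loop_congruence G H S U" and "a \<in> S" and "b \<in> S"
  shows "U `` {a} \<otimes>\<^bsub>loop_quotient G H S U\<^esub> U `` {b} = U `` {tr_op G H S a b}"
proof -
  have equiv: "equiv S U"
    using assms(1) unfolding loop_congruence_def by blast
  define a' where "a' = (SOME x. x \<in> U `` {a})"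
  define b' where "b' = (SOME y. y \<in> U `` {b})"
  have "a \<in> U `` {a}" "b \<in> U `` {b}"
    using equiv assms(2,3) by (auto simp: equiv_def refl_on_def)
  then have "(a, a') \<in> U" "(b, b') \<in> U"
    unfolding a'_def b'_def by (metis Image_singleton_iff someI)+
  then have "(tr_op G H S a b, tr_op G H S a' b') \<in> U"
    using assms(1) unfolding loop_congruence_def by blast
  then have "U `` {tr_op G H S a' b'} = U `` {tr_op G H S a b}"
    using equiv by (simp add: equiv_class_eq)
  then show ?thesis
    unfolding loop_quotient_def a'_def b'_def by simp
qed

locale right_transversal_subgroup = group G + subgroup H G
  for G (structure) and H and S +
  assumes transversal: "right_transversal G H S"
begin

abbreviation rep where "rep \<equiv> tr_rep G H S"

lemma S_subset_carrier: "S \<subseteq> carrier G"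
  and one_in_S: "\<one> \<in> S"
  using transversal unfolding right_transversal_def by auto

lemma ex1_rep: "g \<in> carrier G \<Longrightarrow> \<exists>!s. s \<in> S \<inter> (H #> g)"
  using transversal unfolding right_transversal_def RCOSETS_def by blast

lemma tr_rep_in_S: "g \<in> carrier G \<Longrightarrow> rep g \<in> S"
  and tr_rep_in_rcoset: "g \<in> carrier G \<Longrightarrow> rep g \<in> H #> g"
  using theI'[OF ex1_rep] unfolding tr_rep_def by auto

lemma tr_rep_eqI: "\<lbrakk>g \<in> carrier G; s \<in> S; s \<in> H #> g\<rbrakk> \<Longrightarrow> rep g = s"
  using the1_equality[OF ex1_rep] unfolding tr_rep_def by blast

lemma tr_rep_of_S: "s \<in> S \<Longrightarrow> rep s = s"
  using tr_rep_eqI S_subset_carrier rcos_self[OF _ is_subgroup] by blast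

lemma tr_rep_one: "rep \<one> = \<one>"
  by (simp add: one_in_S tr_rep_of_S)

lemma tr_rep_mult_left:
  assumes "h \<in> H" and "g \<in> carrier G"
  shows "rep (h \<otimes> g) = rep g"
proof -
  have "H #> g = H #> (h \<otimes> g)"
    using repr_independence[OF rcosI[OF assms(1) subset assms(2)] assms(2) is_subgroup] .
  moreover have "h \<otimes> g \<in> carrier G"
    using assms subset by blast
  ultimately show ?thesis
    using tr_rep_eqI tr_rep_in_S[OF assms(2)] tr_rep_in_rcoset[OF assms(2)] by simp
qed

lemma tr_rep_decomp:
  assumes "g \<in> carrier G"
  obtains h where "h \<in> H" and "g = h \<otimes> rep g"
proof -
  have "H #> g = H #> rep g"
    using repr_independence[OF tr_rep_in_rcoset assms is_subgroup] assms .
  then have "g \<in> H #> rep g"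
    using rcos_self[OF assms is_subgroup] by simp
  then show thesis
    using that unfolding r_coset_def by blast
qed

lemma tr_rep_mult_rep:
  assumes "x \<in> carrier G" and "y \<in> carrier G"
  shows "rep (x \<otimes> y) = rep (rep x \<otimes> y)"
proof -
  obtain h where h: "h \<in> H" "x = h \<otimes> rep x"
    using tr_rep_decomp[OF assms(1)] .
  have carrier: "h \<in> carrier G" "rep x \<in> carrier G"
    using h(1) subset assms(1) tr_rep_in_S S_subset_carrier by blast+
  have "rep (x \<otimes> y) = rep (h \<otimes> (rep x \<otimes> y))"
    using h(2) carrier assms(2) by (metis m_assoc)
  also have "\<dots> = rep (rep x \<otimes> y)"
    using h(1) carrier assms(2) by (simp add: tr_rep_mult_left)
  finally show ?thesis .
qed

end

locale loop_congruence_absorbing_theta = right_transversal_subgroup +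
  fixes U :: "('a \<times> 'a) set"
  assumes congruence: "loop_congruence G H S U"
    and theta_related: "{(x, tr_theta G H S x h) | x h. h \<in> H \<and> x \<in> S} \<subseteq> U"
begin

abbreviation Q where "Q \<equiv> loop_quotient G H S U"

abbreviation T where "T \<equiv> U `` {\<one>}"

definition quotient_map :: "'a \<Rightarrow> 'a set" where
  "quotient_map g = U `` {rep g}"

lemma equiv_U: "equiv S U"
  using congruence unfolding loop_congruence_def by blast

lemma T_subset_S: "T \<subseteq> S"
  using equiv_U by (auto simp: equiv_def refl_on_def)

lemma quotient_map_eq_class_of_S: "s \<in> S \<Longrightarrow> quotient_map s = U `` {s}"
  unfolding quotient_map_def by (simp add: tr_rep_of_S)

lemma quotient_map_in_carrier: "g \<in> carrier G \<Longrightarrow> quotient_map g \<in> carrier Q"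
  unfolding quotient_map_def loop_quotient_def by (simp add: quotientI tr_rep_in_S)

lemma quotient_map_surj: "quotient_map ` carrier G = carrier Q"
proof (rule subset_antisym)
  show "carrier Q \<subseteq> quotient_map ` carrier G"
    using S_subset_carrier quotient_map_eq_class_of_S
    by (auto simp: loop_quotient_def quotient_def)
qed (use quotient_map_in_carrier in blast)

lemma quotient_map_one: "quotient_map \<one> = \<one>\<^bsub>Q\<^esub>"
  unfolding quotient_map_def loop_quotient_def by (simp add: tr_rep_one)

lemma quotient_map_mult:
  assumes "g \<in> carrier G" and "g' \<in> carrier G"
  shows "quotient_map (g \<otimes> g') = quotient_map g \<otimes>\<^bsub>Q\<^esub> quotient_map g'"
proof -
  define s s' where "s = rep g" and "s' = rep g'"
  have S: "s \<in> S" "s' \<in> S"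
    using assms tr_rep_in_S unfolding s_def s'_def by blast+
  then have carrier: "s \<in> carrier G" "s' \<in> carrier G"
    using S_subset_carrier by blast+
  obtain h where h: "h \<in> H" "g' = h \<otimes> s'"
    using tr_rep_decomp[OF assms(2)] unfolding s'_def by blast
  then have "h \<in> carrier G"
    using subset by blast
  define t where "t = tr_theta G H S s h"
  have "rep (g \<otimes> g') = rep (s \<otimes> g')"
    unfolding s_def using assms tr_rep_mult_rep by blast
  also have "\<dots> = rep ((s \<otimes> h) \<otimes> s')"
    using h carrier \<open>h \<in> carrier G\<close> by (simp add: m_assoc)
  also have "\<dots> = tr_op G H S t s'"
    using carrier \<open>h \<in> carrier G\<close>
    by (simp add: t_def tr_op_eq_tr_rep tr_theta_eq_tr_rep tr_rep_mult_rep)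
  finally have rep_prod: "rep (g \<otimes> g') = tr_op G H S t s'" .
  have "(t, s) \<in> U"
    using theta_related S h equiv_U unfolding t_def equiv_def sym_def by blast
  moreover have "(s', s') \<in> U"
    using S equiv_U unfolding equiv_def refl_on_def by blast
  ultimately have "(tr_op G H S t s', tr_op G H S s s') \<in> U"
    using congruence unfolding loop_congruence_def by blast
  then have "quotient_map (g \<otimes> g') = U `` {tr_op G H S s s'}"
    unfolding quotient_map_def rep_prod using equiv_U by (simp add: equiv_class_eq)
  also have "\<dots> = quotient_map g \<otimes>\<^bsub>Q\<^esub> quotient_map g'"
    using loop_quotient_mult_class[OF congruence S] by (simp add: quotient_map_def s_def s'_def)
  finally show ?thesis .
qed

lemma quotient_map_hom: "quotient_map \<in> hom G Q"
  by (rule homI) (simp_all add: quotient_map_in_carrier quotient_map_mult)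

lemma group_loop_quotient: "group Q"
  using surj_hom_imp_group quotient_map_hom quotient_map_surj quotient_map_one by blast

sublocale quotient_hom: group_hom G Q quotient_map
  by (simp add: group_hom_def group_hom_axioms_def is_group group_loop_quotient quotient_map_hom)

lemma mem_kernel_quotient_map_iff:
  "g \<in> kernel G Q quotient_map \<longleftrightarrow> g \<in> carrier G \<and> rep g \<in> T"
proof -
  have "rep g \<in> T \<longleftrightarrow> U `` {rep g} = U `` {\<one>}" if "g \<in> carrier G"
    using eq_equiv_class_iff[OF equiv_U one_in_S tr_rep_in_S[OF that]] by auto
  then show ?thesis
    unfolding kernel_def quotient_map_def loop_quotient_def by auto
qed

lemma kernel_quotient_map: "kernel G Q quotient_map = H <#> T"
proof (intro equalityI subsetI)
  fix g
  assume "g \<in> kernel G Q quotient_map"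
  then have "g \<in> carrier G" "rep g \<in> T"
    using mem_kernel_quotient_map_iff by blast+
  moreover obtain h where "h \<in> H" "g = h \<otimes> rep g"
    using tr_rep_decomp[OF \<open>g \<in> carrier G\<close>] .
  ultimately show "g \<in> H <#> T"
    unfolding set_mult_def by blast
next
  fix g
  assume "g \<in> H <#> T"
  then obtain h t where ht: "h \<in> H" "t \<in> T" "g = h \<otimes> t"
    unfolding set_mult_def by blast
  have "t \<in> S"
    using ht(2) T_subset_S by blast
  then have "t \<in> carrier G"
    using S_subset_carrier by blast
  then have "g \<in> carrier G" and "rep g = t"
    using ht \<open>t \<in> S\<close> subset tr_rep_mult_left tr_rep_of_S by auto
  then show "g \<in> kernel G Q quotient_map"
    using ht(2) mem_kernel_quotient_map_iff by simp
qed

lemma subgroup_subset_HT: "H \<subseteq> H <#> T"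
proof
  fix h
  assume "h \<in> H"
  then have "h \<in> carrier G" and "rep h = \<one>"
    using tr_rep_mult_left[of h \<one>] tr_rep_one subset by auto
  moreover have "\<one> \<in> T"
    using equiv_U one_in_S by (auto simp: equiv_def refl_on_def)
  ultimately show "h \<in> H <#> T"
    by (simp flip: kernel_quotient_map add: mem_kernel_quotient_map_iff)
qed

lemma HT_inter_transversal: "(H <#> T) \<inter> S = T"
proof -
  have "s \<in> H <#> T \<longleftrightarrow> s \<in> T" if "s \<in> S" for s
    using that S_subset_carrier tr_rep_of_S
    by (auto simp flip: kernel_quotient_map simp add: mem_kernel_quotient_map_iff)
  then show ?thesis
    using T_subset_S by blast
qed

lemma normal_HT: "H <#> T \<lhd> G"
  using quotient_hom.normal_kernel by (simp add: kernel_quotient_map)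

lemma FactGroup_HT_iso_loop_quotient: "G Mod (H <#> T) \<cong> Q"
  using quotient_hom.FactGroup_iso[OF quotient_map_surj] by (simp add: kernel_quotient_map)

end

theorem mainTheorem8:
  fixes G :: "('a, 'b) monoid_scheme" and H S :: "'a set" and U :: "('a \<times> 'a) set"
  assumes "group G"
    and "subgroup H G"
    and "right_transversal G H S"
    and "loop_congruence G H S U"
    and "{(x, tr_theta G H S x h) | x h. h \<in> H \<and> x \<in> S} \<subseteq> U"
  shows "group (loop_quotient G H S U)
         \<and> H <#>\<^bsub>G\<^esub> (U `` {\<one>\<^bsub>G\<^esub>}) \<lhd> G
         \<and> H \<subseteq> H <#>\<^bsub>G\<^esub> (U `` {\<one>\<^bsub>G\<^esub>})
         \<and> (H <#>\<^bsub>G\<^esub> (U `` {\<one>\<^bsub>G\<^esub>})) \<inter> S = U `` {\<one>\<^bsub>G\<^esub>}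
         \<and> G Mod (H <#>\<^bsub>G\<^esub> (U `` {\<one>\<^bsub>G\<^esub>})) \<cong> loop_quotient G H S U"
proof -
  interpret loop_congruence_absorbing_theta G H S U
    using assms by (simp add: loop_congruence_absorbing_theta_def
        loop_congruence_absorbing_theta_axioms_def right_transversal_subgroup_def
        right_transversal_subgroup_axioms_def)
  show ?thesis
    using group_loop_quotient normal_HT subgroup_subset_HT HT_inter_transversal
      FactGroup_HT_iso_loop_quotient
    by (intro conjI)
qed

end
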